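(* (a) Let $(A,\succ_A,\prec_A,\omega)$ be a quadratic anti-pre-Leibniz algebra. Then $\omega$ is a nondegenerate skew-symmetric $2$-cocycle on the sub-adjacent Leibniz algebra $(A,\circ_A)$, $\circ_A=\succ_A+\prec_A$. (b) Conversely, let $\omega$ be a nondegenerate skew-symmetric $2$-cocycle on a Leibniz algebra $(A,\circ_A)$, and let $\succ_A,\prec_A$ be defined by $\omega(x\succ_A y,z)=\omega(y,x\circ_A z)$ and $\omega(x\prec_A y,z)=-\omega(x,y\circ_A z+z\circ_A y)$. Then $(A,\succ_A,\prec_A)$ is an anti-pre-Leibniz algebra and $\omega$ is invariant on it, i.e. $(A,\succ_A,\prec_A,\omega)$ is a quadratic anti-pre-Leibniz algebra.
   Context: All vector spaces are finite-dimensional over a field $\mathbb K$ of characteristic zero. A Leibniz algebra is a vector space $A$ with multiplication $\circ_A$ satisfying $x\circ_A(y\circ_A z)=(x\circ_A y)\circ_A z+y\circ_A(x\circ_A z)$. A bilinear form $\omega$ on $(A,\circ_A)$ is a $2$-cocycle if $\omega(z,x\circ_A y)=\omega(x,y\circ_A z+z\circ_A y)-\omega(y,x\circ_A z)$ for all $x,y,z$. An anti-pre-Leibniz algebra is a vector space $A$ with multiplications $\succ_A,\prec_A$ such that, with $x\circ_A y=x\succ_A y+x\prec_A y$, for all $x,y,z$: (AL1) $(x\circ_A y)\prec_A z=x\succ_A(y\circ_A z)-y\succ_A(x\circ_A z)$; (AL2) $(x\circ_A y)\succ_A z=y\succ_A(x\succ_A z)-x\succ_A(y\succ_A z)$; (AL3)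 $x\prec_A(y\circ_A z)=(y\succ_A x)\prec_A z-y\succ_A(x\prec_A z)$; (AL4) $(x\succ_A y)\prec_A z=-(y\prec_A x)\prec_A z$. A bilinear form $\omega$ on an anti-pre-Leibniz algebra is invariant if $\omega(x\succ_A y,z)=\omega(y,x\circ_A z)$ and $\omega(x\prec_A y,z)=-\omega(x,y\circ_A z+z\circ_A y)$ for all $x,y,z$. A quadratic anti-pre-Leibniz algebra is an anti-pre-Leibniz algebra with a nondegenerate skew-symmetric invariant bilinear form. *)

theory Defs
  imports Main "HOL.Vector_Spaces"
begin

definition fin_dim_vs :: "('k::field \<Rightarrow> 'v::ab_group_add \<Rightarrow> 'v) \<Rightarrow> bool" where
  "fin_dim_vs sc \<longleftrightarrow> (\<exists>B. finite_dimensional_vector_space sc B)"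

definition bilinear_op :: "('k::field \<Rightarrow> 'v::ab_group_add \<Rightarrow> 'v) \<Rightarrow> ('v \<Rightarrow> 'v \<Rightarrow> 'v) \<Rightarrow> bool" where
  "bilinear_op sc m \<longleftrightarrow>
     (\<forall>x. Vector_Spaces.linear sc sc (m x)) \<and> (\<forall>y. Vector_Spaces.linear sc sc (\<lambda>x. m x y))"

definition bilinear_form :: "('k::field \<Rightarrow> 'v::ab_group_add \<Rightarrow> 'v) \<Rightarrow> ('v \<Rightarrow> 'v \<Rightarrow> 'k) \<Rightarrow> bool" where
  "bilinear_form sc w \<longleftrightarrow>
     (\<forall>x. Vector_Spaces.linear sc (*) (w x)) \<and> (\<forall>y. Vector_Spaces.linear sc (*) (\<lambda>x. w x y))"

definition nondegenerate :: "('v::ab_group_add \<Rightarrow> 'v \<Rightarrow> 'k::field) \<Rightarrow> bool" where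
  "nondegenerate w \<longleftrightarrow> (\<forall>x. (\<forall>y. w x y = 0) \<longrightarrow> x = 0)"

definition skew_symmetric :: "('v \<Rightarrow> 'v \<Rightarrow> 'k::ab_group_add) \<Rightarrow> bool" where
  "skew_symmetric w \<longleftrightarrow> (\<forall>x y. w x y = - w y x)"

definition leibniz_algebra :: "('k::field \<Rightarrow> 'v::ab_group_add \<Rightarrow> 'v) \<Rightarrow> ('v \<Rightarrow> 'v \<Rightarrow> 'v) \<Rightarrow> bool" where
  "leibniz_algebra sc m \<longleftrightarrow> vector_space sc \<and> bilinear_op sc m \<and>
     (\<forall>x y z. m x (m y z) = m (m x y) z + m y (m x z))"

definition two_cocycle :: "('v::ab_group_add \<Rightarrow> 'v \<Rightarrow> 'v) \<Rightarrow> ('v \<Rightarrow> 'v \<Rightarrow> 'k::ab_group_add) \<Rightarrow> bool" where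
  "two_cocycle m w \<longleftrightarrow> (\<forall>x y z. w z (m x y) = w x (m y z + m z y) - w y (m x z))"

definition anti_pre_leibniz :: "('k::field \<Rightarrow> 'v::ab_group_add \<Rightarrow> 'v) \<Rightarrow>
    ('v \<Rightarrow> 'v \<Rightarrow> 'v) \<Rightarrow> ('v \<Rightarrow> 'v \<Rightarrow> 'v) \<Rightarrow> bool" where
  "anti_pre_leibniz sc sr pl \<longleftrightarrow> vector_space sc \<and> bilinear_op sc sr \<and> bilinear_op sc pl \<and>
     (let c = (\<lambda>x y. sr x y + pl x y) in
     (\<forall>x y z. pl (c x y) z = sr x (c y z) - sr y (c x z)) \<and>
     (\<forall>x y z. sr (c x y) z = sr y (sr x z) - sr x (sr y z)) \<and>
     (\<forall>x y z. pl x (c y z) = pl (sr y x) z - sr y (pl x z)) \<and>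
     (\<forall>x y z. pl (sr x y) z = - pl (pl y x) z))"

definition apl_invariant :: "('v::ab_group_add \<Rightarrow> 'v \<Rightarrow> 'v) \<Rightarrow> ('v \<Rightarrow> 'v \<Rightarrow> 'v) \<Rightarrow>
    ('v \<Rightarrow> 'v \<Rightarrow> 'k::ab_group_add) \<Rightarrow> bool" where
  "apl_invariant sr pl w \<longleftrightarrow>
     (\<forall>x y z. w (sr x y) z = w y (sr x z + pl x z)) \<and>
     (\<forall>x y z. w (pl x y) z = - w x ((sr y z + pl y z) + (sr z y + pl z y)))"

definition quadratic_apl :: "('k::field \<Rightarrow> 'v::ab_group_add \<Rightarrow> 'v) \<Rightarrow>
    ('v \<Rightarrow> 'v \<Rightarrow> 'v) \<Rightarrow> ('v \<Rightarrow> 'v \<Rightarrow> 'v) \<Rightarrow> ('v \<Rightarrow> 'v \<Rightarrow> 'k) \<Rightarrow> bool" where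
  "quadratic_apl sc sr pl w \<longleftrightarrow> anti_pre_leibniz sc sr pl \<and> bilinear_form sc w \<and>
     nondegenerate w \<and> skew_symmetric w \<and> apl_invariant sr pl w"

end

theory Submission
  imports Defs
begin

text \<open>Invariance determines \<open>\<succ>\<close> and \<open>\<prec>\<close> through \<open>\<omega>\<close>: pairing with \<open>\<omega>\<close> turns
  \<open>x \<succ> _\<close> into the \<open>\<omega>\<close>-adjoint of \<open>x \<circ> _\<close>, and \<open>_ \<prec> y\<close> into minus the adjoint of the
  symmetrised product \<open>y \<circ> _ + _ \<circ> y\<close>. For (a), the Leibniz identity is a formal consequence
  of (AL1)-(AL4), and the cocycle identity is the sum of the two invariance identities after
  one use of skew-symmetry. For (b), nondegeneracy in finite dimension lets \<open>\<omega>\<close> represent every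
  linear functional, which defines \<open>\<succ>\<close> and \<open>\<prec>\<close>, and each axiom is checked after pairing
  with \<open>\<omega>\<close>. (AL2) and (AL3) then reduce to the Leibniz identity, (AL4) to the fact that
  symmetric products \<open>y \<circ> z + z \<circ> y\<close> annihilate from the left, and (AL1) to
  \<open>\<omega>(x \<circ> y, z \<circ> t + t \<circ> z) = \<omega>(x \<circ> z, y \<circ> t) - \<omega>(y \<circ> z, x \<circ> t)\<close>.
  This last identity is the one real computation: cocycle and Leibniz identities produce it
  with a factor 2, once one knows that symmetric products are \<open>\<omega>\<close>-orthogonal to each other,
  and this is where characteristic zero is used.\<close>

lemmas linear_add_apply = module_hom.add[OF module_hom_linearI]
  and linear_diff_apply = module_hom.diff[OF module_hom_linearI]
  and linear_scale_apply = module_hom.scale[OF module_hom_linearI]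

lemma vector_space_field: "vector_space ((*) :: 'k::field \<Rightarrow> 'k \<Rightarrow> 'k)"
  by unfold_locales (simp_all add: algebra_simps)

lemma linear_functionalI:
  assumes "vector_space sc"
    and "\<And>x y. f (x + y) = f x + f y" and "\<And>c x. f (sc c x) = c * f x"
  shows "Vector_Spaces.linear sc (*) f"
  using assms vector_space_field by (simp add: linear_iff)

lemma bilinear_opD:
  assumes "bilinear_op sc m"
  shows "m (a + b) c = m a c + m b c" and "m c (a + b) = m c a + m c b"
    and "m (sc k a) c = sc k (m a c)" and "m c (sc k a) = sc k (m c a)"
  using assms linear_add_apply[of sc sc "\<lambda>x. m x c"] linear_add_apply[of sc sc "m c"]
    linear_scale_apply[of sc sc "\<lambda>x. m x c"] linear_scale_apply[of sc sc "m c"]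
  unfolding bilinear_op_def by simp_all

lemma bilinear_formD:
  assumes "bilinear_form sc w"
  shows "w (a + b) c = w a c + w b c" and "w c (a + b) = w c a + w c b"
    and "w (a - b) c = w a c - w b c" and "w c (a - b) = w c a - w c b"
    and "w (sc k a) c = k * w a c" and "w c (sc k a) = k * w c a"
  using assms linear_add_apply[of sc "(*)" "\<lambda>x. w x c"] linear_add_apply[of sc "(*)" "w c"]
    linear_diff_apply[of sc "(*)" "\<lambda>x. w x c"] linear_diff_apply[of sc "(*)" "w c"]
    linear_scale_apply[of sc "(*)" "\<lambda>x. w x c"] linear_scale_apply[of sc "(*)" "w c"]
  unfolding bilinear_form_def by simp_all

lemma bilinear_op_add:
  assumes "vector_space sc" "bilinear_op sc f" "bilinear_op sc g"
  shows "bilinear_op sc (\<lambda>x y. f x y + g x y)"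
  using assms bilinear_opD[OF assms(2)] bilinear_opD[OF assms(3)]
  unfolding bilinear_op_def linear_iff
  by (simp add: algebra_simps vector_space.vector_space_assms(1))

lemma leibniz_algebra_sub_adjacent:
  assumes "anti_pre_leibniz sc sr pl"
  shows "leibniz_algebra sc (\<lambda>x y. sr x y + pl x y)"
proof -
  let ?c = "\<lambda>x y. sr x y + pl x y"
  have vs: "vector_space sc" and bsr: "bilinear_op sc sr" and bpl: "bilinear_op sc pl"
    using assms unfolding anti_pre_leibniz_def by auto
  have AL1: "pl (?c x y) z = sr x (?c y z) - sr y (?c x z)"
    and AL2: "sr (?c x y) z = sr y (sr x z) - sr x (sr y z)"
    and AL3: "pl x (?c y z) = pl (sr y x) z - sr y (pl x z)"
    and AL4: "pl (sr x y) z = - pl (pl y x) z" for x y z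
    using assms unfolding anti_pre_leibniz_def Let_def by auto
  have sr_add: "sr x (a + b) = sr x a + sr x b" and pl_add: "pl (a + b) z = pl a z + pl b z"
    for x z a b using bilinear_opD[OF bsr] bilinear_opD[OF bpl] by auto
  have "?c x (?c y z) = ?c (?c x y) z + ?c y (?c x z)" for x y z
  proof -
    have "?c x (?c y z) = sr x (?c y z) + pl (sr y x) z - sr y (pl x z)"
      by (simp add: AL3)
    also have "\<dots> = pl (?c x y) z + sr y (?c x z) + pl (sr y x) z - sr y (pl x z)"
      by (simp add: AL1)
    also have "\<dots> = pl (sr x y) z + sr y (sr x z)"
      by (simp add: pl_add sr_add AL4[of y x])
    also have "\<dots> = ?c (?c x y) z + ?c y (?c x z)"
      by (simp add: AL1 AL2 AL3[of y x] sr_add)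
    finally show ?thesis .
  qed
  then show ?thesis
    unfolding leibniz_algebra_def using vs bilinear_op_add[OF vs bsr bpl] by blast
qed

lemma two_cocycle_sub_adjacent:
  assumes "bilinear_form sc w" "skew_symmetric w" "apl_invariant sr pl w"
  shows "two_cocycle (\<lambda>x y. sr x y + pl x y) w"
  unfolding two_cocycle_def
proof (intro allI)
  fix x y z
  have "w z (sr x y + pl x y) = - w (sr x y + pl x y) z"
    using assms(2) unfolding skew_symmetric_def by blast
  also have "\<dots> = - w (sr x y) z - w (pl x y) z"
    by (simp add: bilinear_formD(1)[OF assms(1)])
  also have "\<dots> = w x (sr y z + pl y z + (sr z y + pl z y)) - w y (sr x z + pl x z)"
    using assms(3) unfolding apl_invariant_def by simp
  finally show "w z (sr x y + pl x y)
      = w x (sr y z + pl y z + (sr z y + pl z y)) - w y (sr x z + pl x z)" .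
qed

lemma nondegenerate_eqI:
  fixes w :: "'v::ab_group_add \<Rightarrow> 'v \<Rightarrow> 'k::field"
  assumes "nondegenerate w" and "\<And>a b t. w (a + b) t = w a t + w b t"
    and "\<And>t. w x t = w y t"
  shows "x = y"
proof -
  have "w (x - y) t = 0" for t
    using assms(2)[of "x - y" y t] assms(3)[of t] by simp
  then have "x - y = 0"
    using assms(1) unfolding nondegenerate_def by blast
  then show ?thesis by simp
qed

lemma nondegenerate_represents_linear_functional:
  fixes w :: "'v::ab_group_add \<Rightarrow> 'v \<Rightarrow> 'k::field"
  assumes "fin_dim_vs sc" "bilinear_form sc w" "nondegenerate w"
    and "Vector_Spaces.linear sc (*) f"
  shows "\<exists>v. \<forall>z. w v z = f z"
proof -
  obtain B where "finite_dimensional_vector_space sc B"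
    using assms(1) unfolding fin_dim_vs_def by blast
  then interpret finite_dimensional_vector_space sc B .
  interpret pair: vector_space_pair sc "(*) :: 'k \<Rightarrow> 'k \<Rightarrow> 'k"
    by (simp add: vector_space_pair_def vector_space_axioms vector_space_field)
  have eq_if_eq_on_Basis: "g = h"
    if "Vector_Spaces.linear sc (*) g" "Vector_Spaces.linear sc (*) h" "\<forall>b\<in>B. g b = h b" for g h
  proof
    show "g x = h x" for x
      using pair.linear_eq_on[OF that(1,2), of x B] that(3) by (simp add: span_Basis)
  qed
  have coefficients_eq: "\<forall>b\<in>B. g b = h b"
    if "(\<Sum>b\<in>B. sc (g b) b) = (\<Sum>b\<in>B. sc (h b) b)" for g h
  proof -
    have "(\<Sum>b\<in>B. sc (g b - h b) b) = 0"
      using that by (simp add: scale_left_diff_distrib sum_subtractf)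
    then show ?thesis
      using independent_Basis unfolding independent_explicit by auto
  qed
  define T where "T v = (\<Sum>b\<in>B. sc (w v b) b)" for v
  have "Vector_Spaces.linear sc sc T"
    unfolding linear_iff T_def
    by (simp add: vector_space_axioms bilinear_formD[OF assms(2)] scale_left_distrib
        sum.distrib scale_sum_right)
  moreover have "inj T"
  proof (rule injI)
    fix x y
    assume "T x = T y"
    then have "w x = w y"
      using assms(2) coefficients_eq unfolding T_def bilinear_form_def
      by (intro eq_if_eq_on_Basis) auto
    then show "x = y"
      by (intro nondegenerate_eqI[OF assms(3) bilinear_formD(1)[OF assms(2)]]) simp
  qed
  ultimately obtain v where "T v = (\<Sum>b\<in>B. sc (f b) b)"
    using linear_inj_imp_surj by (metis surjD)
  then have "w v = f"
    using assms(2,4) coefficients_eq unfolding T_def bilinear_form_def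
    by (intro eq_if_eq_on_Basis) auto
  then show ?thesis
    by auto
qed

lemma linear_if_paired_linear:
  assumes "vector_space sc" "bilinear_form sc w" "nondegenerate w"
    and "\<And>z. Vector_Spaces.linear sc (*) (\<lambda>x. w (f x) z)"
  shows "Vector_Spaces.linear sc sc f"
proof -
  note eqI = nondegenerate_eqI[OF assms(3) bilinear_formD(1)[OF assms(2)]]
  have "f (x + y) = f x + f y" for x y
    by (rule eqI) (simp add: linear_add_apply[OF assms(4)] bilinear_formD[OF assms(2)])
  moreover have "f (sc c x) = sc c (f x)" for c x
    by (rule eqI) (simp add: linear_scale_apply[OF assms(4)] bilinear_formD[OF assms(2)])
  ultimately show ?thesis
    using assms(1) by (simp add: linear_iff)
qed

locale leibniz_cocycle =
  fixes m :: "'v::ab_group_add \<Rightarrow> 'v \<Rightarrow> 'v" and w :: "'v \<Rightarrow> 'v \<Rightarrow> 'k::field_char_0"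
  assumes m_add_left: "m (a + b) c = m a c + m b c"
    and m_add_right: "m c (a + b) = m c a + m c b"
    and w_add_right: "w c (a + b) = w c a + w c b"
    and skew: "w a b = - w b a"
    and leibniz: "m x (m y z) = m (m x y) z + m y (m x z)"
    and cocycle: "w z (m x y) = w x (m y z + m z y) - w y (m x z)"
begin

lemma w_add_left: "w (a + b) c = w a c + w b c"
  by (simp add: skew[of "a + b"] skew[of a c] skew[of b c] w_add_right)

lemma w_zero_left: "w 0 c = 0"
  using w_add_left[of 0 0 c] by simp

lemma w_minus_left: "w (- a) c = - w a c"
  using w_add_left[of "- a" a c] by (simp add: w_zero_left eq_neg_iff_add_eq_0)

lemma w_diff_left: "w (a - b) c = w a c - w b c"
  using w_add_left[of "a - b" b c] by (simp add: algebra_simps)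

lemma w_diff_right: "w c (a - b) = w c a - w c b"
  using w_add_right[of c "a - b" b] by (simp add: algebra_simps)

lemma cocycle_symmetric: "w c (m a b) + w b (m a c) = w a (m b c + m c b)"
  using cocycle[of c a b] by (simp add: algebra_simps)

lemma leibniz_left: "m (m x y) z = m x (m y z) - m y (m x z)"
  using leibniz[of x y z] by (simp add: algebra_simps)

lemma square_left_annihilates: "m (m a a) c = 0"
  using leibniz[of a a c] by simp

lemma symmetrized_left_annihilates: "m (m a b + m b a) c = 0"
  using square_left_annihilates[of "a + b" c] square_left_annihilates[of a c]
    square_left_annihilates[of b c]
  by (simp add: m_add_left m_add_right add.commute)

lemma derivation_symmetrized:
  "m x (m y z + m z y) = (m (m x y) z + m z (m x y)) + (m (m x z) y + m y (m x z))"
  using leibniz[of x y z] leibniz[of x z y] by (simp add: m_add_right algebra_simps)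

lemma symmetrized_isotropic: "w (m a b + m b a) (m c d + m d c) = 0"
proof -
  define S where "S = m c d + m d c"
  have S_annihilates: "m S e = 0" for e
    unfolding S_def by (rule symmetrized_left_annihilates)
  have "w S (m a b + m b a) = 0"
    using cocycle[of S a b] cocycle[of S b a] by (simp add: S_annihilates w_add_right)
  then show ?thesis
    unfolding S_def by (simp add: skew[of "m a b + m b a"])
qed

lemma cocycle_symmetrized_product:
  "w (m x y) (m z t + m t z) = w (m x z) (m y t) - w (m y z) (m x t)"
proof -
  define S where "S = m z t + m t z"
  have S_annihilates: "m S e = 0" for e
    unfolding S_def by (rule symmetrized_left_annihilates)
  have "w (m x y) S = w t (m (m x y) z) + w z (m (m x y) t)"
    unfolding S_def by (rule cocycle_symmetric[symmetric])
  also have "\<dots> = (w t (m x (m y z)) + w z (m x (m y t)))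
      - (w t (m y (m x z)) + w z (m y (m x t)))"
    by (simp add: leibniz_left[of x y] w_diff_right)
  also have "\<dots> = w x (m (m y z) t + m t (m y z) + (m (m y t) z + m z (m y t)))
      - w y (m (m x z) t + m t (m x z) + (m (m x t) z + m z (m x t)))
      - 2 * w (m y z) (m x t) + 2 * w (m x z) (m y t)"
    using cocycle_symmetric[of t x "m y z"] cocycle_symmetric[of z x "m y t"]
      cocycle_symmetric[of t y "m x z"] cocycle_symmetric[of z y "m x t"]
      skew[of "m y t" "m x z"] skew[of "m x t" "m y z"]
    unfolding w_add_right by algebra
  also have "\<dots> = w x (m y S) - w y (m x S) - 2 * w (m y z) (m x t) + 2 * w (m x z) (m y t)"
    unfolding S_def derivation_symmetrized ..
  also have "w x (m y S) - w y (m x S) = - w (m x y) S"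
  proof -
    have "w x (m y S) - w y (m x S) = w (m y x) S"
      using cocycle[of S y x]
      by (simp add: S_annihilates skew[of S] minus_equation_iff[of "w (m y x) S"])
    also have "\<dots> = - w (m x y) S"
      using symmetrized_isotropic[of x y z t] unfolding S_def w_add_left by algebra
    finally show ?thesis .
  qed
  finally have "2 * w (m x y) S = 2 * (w (m x z) (m y t) - w (m y z) (m x t))"
    by (simp add: algebra_simps)
  then show ?thesis
    unfolding S_def mult_cancel_left by simp
qed

end

locale induced_anti_pre_leibniz = leibniz_cocycle m w
  for m :: "'v::ab_group_add \<Rightarrow> 'v \<Rightarrow> 'v" and w :: "'v \<Rightarrow> 'v \<Rightarrow> 'k::field_char_0" +
  fixes sr pl :: "'v \<Rightarrow> 'v \<Rightarrow> 'v"
  assumes nondegenerate: "nondegenerate w"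
    and sr_pairing: "w (sr x y) z = w y (m x z)"
    and pl_pairing: "w (pl x y) z = - w x (m y z + m z y)"
begin

lemma eq_if_pairings_eq: "(\<And>t. w a t = w b t) \<Longrightarrow> a = b"
  using nondegenerate_eqI[OF nondegenerate w_add_left] .

lemma sr_plus_pl: "sr x y + pl x y = m x y"
  by (rule eq_if_pairings_eq)
    (simp add: w_add_left sr_pairing pl_pairing skew[of "m x y"] cocycle[of _ x y])

lemma AL1: "pl (m x y) z = sr x (m y z) - sr y (m x z)"
  by (rule eq_if_pairings_eq)
    (simp add: w_diff_left sr_pairing pl_pairing cocycle_symmetrized_product)

lemma AL2: "sr (m x y) z = sr y (sr x z) - sr x (sr y z)"
  by (rule eq_if_pairings_eq) (simp add: w_diff_left sr_pairing leibniz_left w_diff_right)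

lemma AL3: "pl x (m y z) = pl (sr y x) z - sr y (pl x z)"
proof (rule eq_if_pairings_eq)
  fix t
  have "m (m y z) t + m t (m y z) = m y (m z t + m t z) - (m z (m y t) + m (m y t) z)"
    by (simp add: derivation_symmetrized[of y z t])
  then show "w (pl x (m y z)) t = w (pl (sr y x) z - sr y (pl x z)) t"
    by (simp add: w_diff_left sr_pairing pl_pairing w_diff_right)
qed

lemma AL4: "pl (sr x y) z = - pl (pl y x) z"
proof (rule eq_if_pairings_eq)
  fix t
  have "w (pl (pl y x) z) t = w y (m x (m z t + m t z))"
    using symmetrized_left_annihilates[of z t x] by (simp add: pl_pairing)
  then show "w (pl (sr x y) z) t = w (- pl (pl y x) z) t"
    by (simp add: w_minus_left sr_pairing pl_pairing)
qed

end

lemma leibniz_cocycleI: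
  fixes w :: "'v::ab_group_add \<Rightarrow> 'v \<Rightarrow> 'k::field_char_0"
  assumes "leibniz_algebra sc m" "bilinear_form sc w" "skew_symmetric w" "two_cocycle m w"
  shows "leibniz_cocycle m w"
proof
  have "bilinear_op sc m"
    using assms(1) unfolding leibniz_algebra_def by blast
  then show "m (a + b) c = m a c + m b c" "m c (a + b) = m c a + m c b" for a b c
    by (simp_all add: bilinear_opD)
  show "w c (a + b) = w c a + w c b" for a b c
    by (rule bilinear_formD(2)[OF assms(2)])
  show "w a b = - w b a" for a b
    using assms(3) unfolding skew_symmetric_def by blast
  show "m x (m y z) = m (m x y) z + m y (m x z)" for x y z
    using assms(1) unfolding leibniz_algebra_def by blast
  show "w z (m x y) = w x (m y z + m z y) - w y (m x z)" for x y z
    using assms(4) unfolding two_cocycle_def by blast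
qed

lemma induced_products_exist:
  assumes "fin_dim_vs sc" "leibniz_algebra sc m" "bilinear_form sc w" "nondegenerate w"
  shows "\<exists>sr pl. (\<forall>x y z. w (sr x y) z = w y (m x z)) \<and>
                 (\<forall>x y z. w (pl x y) z = - w x (m y z + m z y))"
proof -
  have vs: "vector_space sc" and bm: "bilinear_op sc m"
    using assms(2) unfolding leibniz_algebra_def by blast+
  obtain r where r: "\<And>f z. Vector_Spaces.linear sc (*) f \<Longrightarrow> w (r f) z = f z"
    using nondegenerate_represents_linear_functional[OF assms(1,3,4)] by metis
  note bilinear = bilinear_opD[OF bm] bilinear_formD[OF assms(3)]
  have "\<forall>x y z. w (r (\<lambda>z. w y (m x z))) z = w y (m x z)"
    by (intro allI r linear_functionalI[OF vs]) (simp_all add: bilinear)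
  moreover have "\<forall>x y z. w (r (\<lambda>z. - w x (m y z + m z y))) z = - w x (m y z + m z y)"
    by (intro allI r linear_functionalI[OF vs]) (simp_all add: bilinear algebra_simps)
  ultimately show ?thesis
    by (intro exI[where x = "\<lambda>x y. r (\<lambda>z. w y (m x z))"]
        exI[where x = "\<lambda>x y. r (\<lambda>z. - w x (m y z + m z y))"]) simp
qed

lemma quadratic_apl_induced:
  fixes w :: "'v::ab_group_add \<Rightarrow> 'v \<Rightarrow> 'k::field_char_0"
  assumes "leibniz_algebra sc m" "bilinear_form sc w" "nondegenerate w" "skew_symmetric w"
    "two_cocycle m w"
    and sr: "\<And>x y z. w (sr x y) z = w y (m x z)"
    and pl: "\<And>x y z. w (pl x y) z = - w x (m y z + m z y)"
  shows "(\<forall>x y. sr x y + pl x y = m x y) \<and> quadratic_apl sc sr pl w"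
proof -
  interpret induced_anti_pre_leibniz m w sr pl
    using leibniz_cocycleI[OF assms(1,2,4,5)] assms(3) sr pl
    by (simp add: induced_anti_pre_leibniz_def induced_anti_pre_leibniz_axioms_def)
  have vs: "vector_space sc" and bm: "bilinear_op sc m"
    using assms(1) unfolding leibniz_algebra_def by blast+
  note bilinear = bilinear_opD[OF bm] bilinear_formD[OF assms(2)]
  note linear_from_pairing = linear_if_paired_linear[OF vs assms(2,3)]
  have "bilinear_op sc sr"
    unfolding bilinear_op_def
    by (intro allI conjI linear_from_pairing linear_functionalI[OF vs]) (simp_all add: sr bilinear)
  moreover have "bilinear_op sc pl"
    unfolding bilinear_op_def
    by (intro allI conjI linear_from_pairing linear_functionalI[OF vs])
      (simp_all add: pl bilinear algebra_simps)
  ultimately show ?thesis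
    unfolding quadratic_apl_def anti_pre_leibniz_def apl_invariant_def Let_def sr_plus_pl
    using vs assms(2-4) AL1 AL2 AL3 AL4 sr pl by blast
qed

theorem proposition2p22:
  fixes sc :: "'k::field_char_0 \<Rightarrow> 'v::ab_group_add \<Rightarrow> 'v"
  assumes "fin_dim_vs sc"
  shows
    "(\<forall>sr pl (w :: 'v \<Rightarrow> 'v \<Rightarrow> 'k). quadratic_apl sc sr pl w \<longrightarrow>
        leibniz_algebra sc (\<lambda>x y. sr x y + pl x y) \<and> bilinear_form sc w \<and>
        nondegenerate w \<and> skew_symmetric w \<and> two_cocycle (\<lambda>x y. sr x y + pl x y) w)
     \<and>
     (\<forall>m (w :: 'v \<Rightarrow> 'v \<Rightarrow> 'k). leibniz_algebra sc m \<and> bilinear_form sc w \<and>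
        nondegenerate w \<and> skew_symmetric w \<and> two_cocycle m w \<longrightarrow>
        (\<exists>sr pl. (\<forall>x y z. w (sr x y) z = w y (m x z)) \<and>
                 (\<forall>x y z. w (pl x y) z = - w x (m y z + m z y))) \<and>
        (\<forall>sr pl. (\<forall>x y z. w (sr x y) z = w y (m x z)) \<and>
                 (\<forall>x y z. w (pl x y) z = - w x (m y z + m z y)) \<longrightarrow>
           (\<forall>x y. sr x y + pl x y = m x y) \<and> quadratic_apl sc sr pl w))"
proof (rule conjI; intro allI impI)
  fix sr pl and w :: "'v \<Rightarrow> 'v \<Rightarrow> 'k"
  assume "quadratic_apl sc sr pl w"
  then show "leibniz_algebra sc (\<lambda>x y. sr x y + pl x y) \<and> bilinear_form sc w \<and>
      nondegenerate w \<and> skew_symmetric w \<and> two_cocycle (\<lambda>x y. sr x y + pl x y) w"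
    unfolding quadratic_apl_def
    using leibniz_algebra_sub_adjacent two_cocycle_sub_adjacent by blast
next
  fix m and w :: "'v \<Rightarrow> 'v \<Rightarrow> 'k"
  assume "leibniz_algebra sc m \<and> bilinear_form sc w \<and> nondegenerate w \<and>
      skew_symmetric w \<and> two_cocycle m w"
  then show "(\<exists>sr pl. (\<forall>x y z. w (sr x y) z = w y (m x z)) \<and>
                 (\<forall>x y z. w (pl x y) z = - w x (m y z + m z y))) \<and>
        (\<forall>sr pl. (\<forall>x y z. w (sr x y) z = w y (m x z)) \<and>
                 (\<forall>x y z. w (pl x y) z = - w x (m y z + m z y)) \<longrightarrow>
           (\<forall>x y. sr x y + pl x y = m x y) \<and> quadratic_apl sc sr pl w)"
    using induced_products_exist[OF assms, of m w] quadratic_apl_induced[of sc m w] by blast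
qed

end
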